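(* Let $X\neq\emptyset$ be a countable set and let $F=(F_x)_{x\in X}$ be a family of finite-dimensional complex vector spaces. Let $A\colon \Gamma(X;F)\to\Gamma(X;F)$ be a continuous linear operator. Then the following are equivalent: (i) $A$ is surjective; (ii) the dual operator $A'\colon \Gamma_c(X;F')\to\Gamma_c(X;F')$ is injective.
   Context: $\Gamma(X;F)=\prod_{x\in X}F_x$ is the space of all maps $f$ on $X$ with $f(x)\in F_x$ for all $x$, equipped with the product topology (each $F_x$ carries its unique Hausdorff vector space topology); equivalently the locally convex topology generated by the seminorms $p_K(f)=\sum_{x\in K}\|f(x)\|_x$, $K\subseteq X$ finite, where $\|\cdot\|_x$ is a fixed norm on $F_x$. $\Gamma_c(X;F)$ is the subspace of $f$ vanishing outside a finite set. $F'=(F_x')_{x\in X}$ is the family of dual spaces. $\Gamma_c(X;F')$ is identified with the continuous dual of $\Gamma(X;F)$ via the pairing $(\varphi,f)=\sum_{x\in X}\varphi(x)(f(x))$. A linear operator $A$ on $\Gamma(X;F)$ is continuous iff for every $x\in X$ there is a finite $K\subseteq X$ such that $Af(x)$ depends only on $f|_K$. For continuous $A$, the dual operator $A'\colon\Gamma_c(X;F')\to\Gamma_c(X;F')$ is defined by $(A'\varphi,f)=(\varphi,Af)$ for all $f\in\Gamma(X;F)$, $\varphi\in\Gamma_c(X;F')$. *)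

theory Defs
  imports "HOL-Analysis.Analysis"
begin

text \<open>Each fibre F x is modelled as a finite-dimensional complex-linear subspace of the
  ambient complex vector space nat \<Rightarrow> complex (pointwise operations).  Every
  finite-dimensional complex vector space is isomorphic to such a subspace.  The ambient
  space carries the product topology, whose restriction to a finite-dimensional subspace is
  its unique Hausdorff vector space topology.\<close>

definition vadd :: "(nat \<Rightarrow> complex) \<Rightarrow> (nat \<Rightarrow> complex) \<Rightarrow> (nat \<Rightarrow> complex)" where
  "vadd u v = (\<lambda>i. u i + v i)"

definition cscale :: "complex \<Rightarrow> (nat \<Rightarrow> complex) \<Rightarrow> (nat \<Rightarrow> complex)" where
  "cscale c v = (\<lambda>i. c * v i)"

definition fd_csubspace :: "(nat \<Rightarrow> complex) set \<Rightarrow> bool" where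
  "fd_csubspace S \<longleftrightarrow>
     (\<lambda>_. 0) \<in> S \<and> (\<forall>u\<in>S. \<forall>v\<in>S. vadd u v \<in> S) \<and> (\<forall>c. \<forall>v\<in>S. cscale c v \<in> S) \<and>
     (\<exists>B. finite B \<and> B \<subseteq> S \<and> S = {(\<lambda>i. \<Sum>b\<in>B. c b * b i) | c. True})"

definition Gamma_sec :: "'x set \<Rightarrow> ('x \<Rightarrow> (nat \<Rightarrow> complex) set) \<Rightarrow> ('x \<Rightarrow> nat \<Rightarrow> complex) set" where
  "Gamma_sec X F = PiE X F"

definition sect_top :: "'x set \<Rightarrow> ('x \<Rightarrow> (nat \<Rightarrow> complex) set) \<Rightarrow> ('x \<Rightarrow> nat \<Rightarrow> complex) topology" where
  "sect_top X F = product_topology (\<lambda>x. subtopology euclidean (F x)) X"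

definition lin_op :: "'x set \<Rightarrow> ('x \<Rightarrow> (nat \<Rightarrow> complex) set)
    \<Rightarrow> (('x \<Rightarrow> nat \<Rightarrow> complex) \<Rightarrow> ('x \<Rightarrow> nat \<Rightarrow> complex)) \<Rightarrow> bool" where
  "lin_op X F A \<longleftrightarrow>
     A \<in> Gamma_sec X F \<rightarrow> Gamma_sec X F \<and>
     (\<forall>f\<in>Gamma_sec X F. \<forall>g\<in>Gamma_sec X F.
        A (\<lambda>x\<in>X. vadd (f x) (g x)) = (\<lambda>x\<in>X. vadd (A f x) (A g x))) \<and>
     (\<forall>c. \<forall>f\<in>Gamma_sec X F. A (\<lambda>x\<in>X. cscale c (f x)) = (\<lambda>x\<in>X. cscale c (A f x)))"

text \<open>An element of the dual F_x' is a complex-linear functional on F x; it is represented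
  canonically by its extension by 0 outside F x.\<close>
definition lin_functional :: "(nat \<Rightarrow> complex) set \<Rightarrow> ((nat \<Rightarrow> complex) \<Rightarrow> complex) \<Rightarrow> bool" where
  "lin_functional S l \<longleftrightarrow>
     (\<forall>u\<in>S. \<forall>v\<in>S. l (vadd u v) = l u + l v) \<and> (\<forall>c. \<forall>v\<in>S. l (cscale c v) = c * l v) \<and>
     (\<forall>v. v \<notin> S \<longrightarrow> l v = 0)"

definition Gamma_c_dual :: "'x set \<Rightarrow> ('x \<Rightarrow> (nat \<Rightarrow> complex) set)
    \<Rightarrow> ('x \<Rightarrow> (nat \<Rightarrow> complex) \<Rightarrow> complex) set" where
  "Gamma_c_dual X F = {\<phi>. (\<forall>x. x \<notin> X \<longrightarrow> \<phi> x = (\<lambda>_. 0)) \<and>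
       (\<forall>x\<in>X. lin_functional (F x) (\<phi> x)) \<and> finite {x. \<phi> x \<noteq> (\<lambda>_. 0)}}"

definition pairing :: "'x set \<Rightarrow> ('x \<Rightarrow> (nat \<Rightarrow> complex) \<Rightarrow> complex) \<Rightarrow> ('x \<Rightarrow> nat \<Rightarrow> complex) \<Rightarrow> complex" where
  "pairing X \<phi> f = (\<Sum>x\<in>{x\<in>X. \<phi> x \<noteq> (\<lambda>_. 0)}. \<phi> x (f x))"

definition dual_op :: "'x set \<Rightarrow> ('x \<Rightarrow> (nat \<Rightarrow> complex) set)
    \<Rightarrow> (('x \<Rightarrow> nat \<Rightarrow> complex) \<Rightarrow> ('x \<Rightarrow> nat \<Rightarrow> complex))
    \<Rightarrow> ('x \<Rightarrow> (nat \<Rightarrow> complex) \<Rightarrow> complex) \<Rightarrow> ('x \<Rightarrow> (nat \<Rightarrow> complex) \<Rightarrow> complex)" where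
  "dual_op X F A \<phi> = (THE \<psi>. \<psi> \<in> Gamma_c_dual X F \<and>
       (\<forall>f\<in>Gamma_sec X F. pairing X \<psi> f = pairing X \<phi> (A f)))"

end

theory Submission
  imports Defs "HOL-Library.Function_Algebras"
begin

text \<open>Continuity of \<open>A\<close> means that each value \<open>(A f)(x)\<close> depends on \<open>f\<close> only through finitely
  many fibres. Hence \<open>(A' \<phi>)(x)(v) = (\<phi>, A (\<delta>\<^sub>x v))\<close> is again finitely supported, and by
  nondegeneracy of the pairing a surjective \<open>A\<close> has an injective dual.

  Conversely, let \<open>A'\<close> be injective. For finitely many points, \<open>A f = y\<close> can be solved there by a
  section supported on the finitely many fibres those values depend on: otherwise a functional
  separating \<open>y\<close> from the finite-dimensional range would be a nonzero element of the kernel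
  of \<open>A'\<close>. Enumerating \<open>X = {x\<^sub>0, x\<^sub>1, \<dots>}\<close>, the local solutions over \<open>{x\<^sub>0, \<dots>, x\<^sub>n}\<close> form
  an inverse system of nonempty affine spaces of finitely supported sections. Their images
  stabilize by a dimension argument (the Mittag-Leffler condition), so a compatible sequence of
  local solutions exists, and it glues to a global solution.\<close>

section \<open>Finite-dimensional linear algebra\<close>

context vector_space
begin

lemma independent_card_le_dim:
  assumes "independent I" "I \<subseteq> T" "T \<subseteq> span E" "finite E"
  shows "finite I \<and> card I \<le> dim T"
proof -
  obtain C where C: "C \<subseteq> T" "independent C" "T \<subseteq> span C" "card C = dim T"
    using basis_exists by blast
  have "finite C"
    using independent_span_bound[OF assms(4) C(2)] C(1) assms(3) by (meson order_trans)
  moreover have "I \<subseteq> span C" using assms(2) C(3) by (rule order_trans)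
  ultimately show ?thesis
    using independent_span_bound[of C I] assms(1) C(4) by simp
qed

lemma subspace_eq_if_dim_le:
  assumes "subspace S" "S \<subseteq> T" "T \<subseteq> span E" "finite E" "dim T \<le> dim S"
  shows "S = T"
proof (rule ccontr)
  assume "S \<noteq> T"
  then obtain t where t: "t \<in> T" "t \<notin> S" using assms(2) by blast
  obtain B where B: "B \<subseteq> S" "independent B" "S \<subseteq> span B" "card B = dim S"
    using basis_exists by blast
  have "t \<notin> span B" using span_minimal[OF B(1) assms(1)] t(2) by blast
  then have "independent (insert t B)" by (rule independent_insertI[OF _ B(2)])
  moreover have "insert t B \<subseteq> T" using t(1) B(1) assms(2) by blast
  ultimately have "finite (insert t B) \<and> card (insert t B) \<le> dim T"
    using independent_card_le_dim assms(3,4) by presburger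
  moreover have "t \<notin> B" using t(2) B(1) by blast
  ultimately have "Suc (dim S) \<le> dim T" using B(4) by auto
  then show False using assms(5) by simp
qed

lemma minimal_subspace_exists:
  assumes "i0 \<in> I" "\<And>i. i \<in> I \<Longrightarrow> subspace (W i)" "\<And>i. i \<in> I \<Longrightarrow> W i \<subseteq> span E" "finite E"
  obtains i where "i \<in> I" "\<And>j. j \<in> I \<Longrightarrow> W j \<subseteq> W i \<Longrightarrow> W j = W i"
proof -
  obtain i where i: "i \<in> I" and least: "\<And>j. j \<in> I \<Longrightarrow> dim (W i) \<le> dim (W j)"
    using ex_has_least_nat[of "\<lambda>i. i \<in> I" i0 "\<lambda>i. dim (W i)"] assms(1) by blast
  show ?thesis
  proof (rule that[OF i])
    fix j assume "j \<in> I" "W j \<subseteq> W i"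
    then show "W j = W i"
      using subspace_eq_if_dim_le[of "W j" "W i" E] assms(2-4) i least by blast
  qed
qed

lemma separating_functional:
  assumes "subspace R" "y \<notin> R"
  obtains l where "Vector_Spaces.linear scale (*) l" "l y = 1" "\<And>r. r \<in> R \<Longrightarrow> l r = 0"
proof -
  interpret scalars: vector_space "(*) :: 'a \<Rightarrow> 'a \<Rightarrow> 'a"
    by unfold_locales (simp_all add: algebra_simps)
  interpret vector_space_pair scale "(*) :: 'a \<Rightarrow> 'a \<Rightarrow> 'a" ..
  obtain C where C: "C \<subseteq> R" "independent C" "R \<subseteq> span C"
    using maximal_independent_subset by blast
  have "y \<notin> span C" using span_minimal[OF C(1) assms(1)] assms(2) by blast
  then have ind: "independent (insert y C)" using independent_insertI C(2) by blast
  define l where "l = construct (insert y C) (\<lambda>b. if b = y then 1 else 0)"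
  have lin: "Vector_Spaces.linear scale (*) l"
    unfolding l_def by (rule linear_construct[OF ind])
  have "l c = 0" if "c \<in> C" for c
    using construct_basis[OF ind] that C(1) assms(2) by (auto simp: l_def)
  then have "l r = 0" if "r \<in> R" for r
    using linear_eq_0_on_span[OF lin] C(3) that by blast
  moreover have "l y = 1" using construct_basis[OF ind] by (simp add: l_def)
  ultimately show ?thesis using that lin by blast
qed

end

section \<open>Inverse systems\<close>

lemma mittag_leffler_thread:
  fixes S :: "nat \<Rightarrow> 'a set" and p :: "nat \<Rightarrow> 'a \<Rightarrow> 'a"
  assumes nonempty: "\<And>m. S m \<noteq> {}"
    and p_in: "\<And>n m g. n \<le> m \<Longrightarrow> g \<in> S m \<Longrightarrow> p n g \<in> S n"
    and p_comp: "\<And>n m g. n \<le> m \<Longrightarrow> p n (p m g) = p n g"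
    and stable: "\<And>n. \<exists>M\<ge>n. \<forall>m\<ge>M. p n ` S m = p n ` S M"
  obtains s where "\<And>n. s n \<in> S n" "\<And>k n. k \<le> n \<Longrightarrow> p k (s n) = s k"
proof -
  obtain M where M: "\<And>n. n \<le> M n" "\<And>n m. M n \<le> m \<Longrightarrow> p n ` S m = p n ` S (M n)"
    using stable by metis
  define T where "T n = p n ` S (M n)" for n
  \<comment> \<open>Every point of the stable image \<open>T n\<close> lifts to \<open>T (Suc n)\<close>; dependent choice does the rest.\<close>
  have lift: "\<exists>u. u \<in> T (Suc n) \<and> p n u = t" if "t \<in> T n" for n t
  proof -
    define m where "m = max (M n) (M (Suc n))"
    have "t \<in> p n ` S m" using that M(2)[of n m] by (simp add: T_def m_def)
    then obtain g where g: "g \<in> S m" "t = p n g" by blast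
    have "p (Suc n) g \<in> T (Suc n)" using g(1) M(2)[of "Suc n" m] by (auto simp: T_def m_def)
    moreover have "p n (p (Suc n) g) = t" using p_comp[of n "Suc n" g] g(2) by simp
    ultimately show ?thesis by blast
  qed
  have "\<exists>t. t \<in> T 0" using nonempty by (auto simp: T_def)
  then have "\<exists>s. \<forall>n. s n \<in> T n \<and> p n (s (Suc n)) = s n"
    using dependent_nat_choice[of "\<lambda>n t. t \<in> T n" "\<lambda>n t u. p n u = t"] lift by simp
  then obtain s where s: "\<And>n. s n \<in> T n" "\<And>n. p n (s (Suc n)) = s n" by blast
  have "s n \<in> S n" for n using s(1)[of n] p_in[OF M(1)] by (auto simp: T_def)
  moreover have "p k (s n) = s k" if "k \<le> n" for k n
    using that
  proof (induction n rule: dec_induct)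
    case base
    then show ?case using s(1)[of k] p_comp[of k k] by (auto simp: T_def)
  next
    case (step n)
    then show ?case using p_comp[of k n "s (Suc n)"] s(2) by simp
  qed
  ultimately show ?thesis using that by blast
qed

section \<open>Spaces of sections\<close>

lemma sum_fun_apply: "sum f A x = (\<Sum>a\<in>A. f a x)"
  by (induction A rule: infinite_finite_induct) auto

definition vscale :: "complex \<Rightarrow> ('a \<Rightarrow> complex) \<Rightarrow> ('a \<Rightarrow> complex)" where
  "vscale c v = (\<lambda>i. c * v i)"

definition sscale :: "complex \<Rightarrow> ('x \<Rightarrow> 'a \<Rightarrow> complex) \<Rightarrow> ('x \<Rightarrow> 'a \<Rightarrow> complex)" where
  "sscale c f = (\<lambda>x. vscale c (f x))"

lemma vscale_apply [simp]: "vscale c v i = c * v i"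
  by (simp add: vscale_def)

lemma sscale_apply [simp]: "sscale c f x = vscale c (f x)"
  by (simp add: sscale_def)

interpretation fun_vs: vector_space "vscale :: complex \<Rightarrow> ('a \<Rightarrow> complex) \<Rightarrow> _"
  by unfold_locales (auto simp: fun_eq_iff algebra_simps)

interpretation sec_vs: vector_space "sscale :: complex \<Rightarrow> ('x \<Rightarrow> 'a \<Rightarrow> complex) \<Rightarrow> _"
  by unfold_locales (auto simp: fun_eq_iff algebra_simps)

interpretation fun_sec_vs: vector_space_pair
  "vscale :: complex \<Rightarrow> ('a \<Rightarrow> complex) \<Rightarrow> _" "sscale :: complex \<Rightarrow> ('x \<Rightarrow> 'a \<Rightarrow> complex) \<Rightarrow> _"
  ..

lemma vadd_eq_plus: "vadd u v = u + v"
  by (simp add: vadd_def fun_eq_iff)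

lemma cscale_eq_vscale: "cscale c v = vscale c v"
  by (simp add: cscale_def fun_eq_iff)

lemma fd_csubspace_eq_span:
  assumes "fd_csubspace S"
  obtains B where "finite B" "S = fun_vs.span B"
proof -
  obtain B where B: "finite B" "S = {(\<lambda>i. \<Sum>b\<in>B. c b * b i) | c. True}"
    using assms unfolding fd_csubspace_def by blast
  have "fun_vs.span B = range (\<lambda>c. \<Sum>b\<in>B. vscale (c b) b)"
    by (rule fun_vs.span_finite[OF B(1)])
  also have "\<dots> = S"
    by (auto simp: B(2) fun_eq_iff sum_fun_apply)
  finally show ?thesis using that B(1) by blast
qed

lemma fd_csubspace_subspace: "fd_csubspace S \<Longrightarrow> fun_vs.subspace S"
  by (metis fd_csubspace_eq_span fun_vs.subspace_span)

lemma finite_coordinates_separate_span: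
  fixes B :: "('a \<Rightarrow> complex) set"
  assumes "finite B"
  obtains I where "finite I" "\<And>v. v \<in> fun_vs.span B \<Longrightarrow> (\<forall>i\<in>I. v i = 0) \<Longrightarrow> v = 0"
proof -
  define K where "K I = {v \<in> fun_vs.span B. \<forall>i\<in>I. v i = 0}" for I
  have "fun_vs.subspace (K I)" for I
    unfolding K_def fun_vs.subspace_def by (auto simp: fun_vs.span_zero fun_vs.span_add fun_vs.span_scale)
  moreover have "K I \<subseteq> fun_vs.span B" for I by (auto simp: K_def)
  ultimately obtain I where I: "I \<in> Collect finite"
    and minimal: "\<And>J. J \<in> Collect finite \<Longrightarrow> K J \<subseteq> K I \<Longrightarrow> K J = K I"
    using fun_vs.minimal_subspace_exists[of "{}" "Collect finite" K B] assms by (metis finite.emptyI mem_Collect_eq)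
  have "v = 0" if "v \<in> K I" for v
  proof -
    have "v j = 0" for j
    proof -
      have "K (insert j I) = K I" using minimal[of "insert j I"] I by (auto simp: K_def)
      then show "v j = 0" using that by (auto simp: K_def)
    qed
    then show "v = 0" by (simp add: fun_eq_iff)
  qed
  with I that show ?thesis by (auto simp: K_def)
qed

lemma continuous_functional_small_on_cylinder:
  fixes l :: "('x \<Rightarrow> nat \<Rightarrow> complex) \<Rightarrow> complex"
  assumes cont: "continuous_map (sect_top X F) euclidean l"
    and zero: "(\<lambda>x\<in>X. 0) \<in> Gamma_sec X F" "l (\<lambda>x\<in>X. 0) = 0"
  obtains K where "finite K" "K \<subseteq> X"
    "\<And>f. f \<in> Gamma_sec X F \<Longrightarrow> (\<forall>z\<in>K. f z = 0) \<Longrightarrow> norm (l f) < 1"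
proof -
  let ?F = "\<lambda>x. subtopology euclidean (F x)"
  let ?O = "{f \<in> topspace (sect_top X F). l f \<in> ball 0 1}"
  have zero_in: "(\<lambda>x\<in>X. 0) \<in> ?O" using zero by (simp add: sect_top_def Gamma_sec_def)
  have "openin (product_topology ?F X) ?O"
    unfolding sect_top_def[symmetric] by (rule openin_continuous_map_preimage[OF cont]) simp
  from openin_product_topology_alt[THEN iffD1, rule_format, OF this zero_in]
  obtain U where U: "finite {j \<in> X. U j \<noteq> F j}"
      "(\<lambda>x\<in>X. 0) \<in> Pi\<^sub>E X U" "Pi\<^sub>E X U \<subseteq> ?O"
    by (auto simp: topspace_subtopology)
  show ?thesis
  proof (rule that[of "{j \<in> X. U j \<noteq> F j}"])
    fix f assume f: "f \<in> Gamma_sec X F" and vanish: "\<forall>z\<in>{j \<in> X. U j \<noteq> F j}. f z = 0"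
    have "f x \<in> U x" if "x \<in> X" for x
      using f U(2) vanish that by (cases "U x = F x") (auto simp: Gamma_sec_def)
    then have "f \<in> Pi\<^sub>E X U" using f by (auto simp: Gamma_sec_def)
    with U(3) show "norm (l f) < 1" by auto
  qed (use U(1) in auto)
qed

lemma continuous_functional_finite_dependence:
  fixes l :: "('x \<Rightarrow> nat \<Rightarrow> complex) \<Rightarrow> complex"
  assumes cont: "continuous_map (sect_top X F) euclidean l"
    and subspace: "\<And>x. x \<in> X \<Longrightarrow> fun_vs.subspace (F x)"
    and homogeneous: "\<And>c f. f \<in> Gamma_sec X F \<Longrightarrow> l (\<lambda>x\<in>X. vscale c (f x)) = c * l f"
  obtains K where "finite K" "K \<subseteq> X" "\<And>f. f \<in> Gamma_sec X F \<Longrightarrow> (\<forall>z\<in>K. f z = 0) \<Longrightarrow> l f = 0"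
proof -
  have zero: "(\<lambda>x\<in>X. 0) \<in> Gamma_sec X F"
    using subspace fun_vs.subspace_0 by (auto simp: Gamma_sec_def)
  have "(\<lambda>x\<in>X. vscale 0 ((\<lambda>x\<in>X. 0) x)) = (\<lambda>x\<in>X. 0 :: nat \<Rightarrow> complex)"
    by (auto simp: fun_eq_iff)
  then have "l (\<lambda>x\<in>X. 0) = 0" using homogeneous[OF zero, of 0] by simp
  then obtain K where K: "finite K" "K \<subseteq> X"
    and small: "\<And>f. f \<in> Gamma_sec X F \<Longrightarrow> (\<forall>z\<in>K. f z = 0) \<Longrightarrow> norm (l f) < 1"
    using continuous_functional_small_on_cylinder[OF cont zero] by blast
  show ?thesis
  proof (rule that[OF K])
    fix f assume f: "f \<in> Gamma_sec X F" and vanish: "\<forall>z\<in>K. f z = 0"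
    show "l f = 0"
    proof (rule ccontr)
      \<comment> \<open>Rescaling \<open>f\<close> keeps it vanishing on \<open>K\<close> but makes \<open>l\<close> take the value \<open>1\<close>.\<close>
      assume "l f \<noteq> 0"
      define g where "g = (\<lambda>x\<in>X. vscale (inverse (l f)) (f x))"
      have "g \<in> Gamma_sec X F"
        using f fun_vs.subspace_scale[OF subspace] by (auto simp: g_def Gamma_sec_def)
      moreover have "\<forall>z\<in>K. g z = 0" using vanish K(2) by (auto simp: g_def fun_eq_iff)
      moreover have "l g = 1" using homogeneous[OF f] \<open>l f \<noteq> 0\<close> by (simp add: g_def)
      ultimately show False using small by fastforce
    qed
  qed
qed

definition restrict0 :: "('x \<Rightarrow> 'b::zero) \<Rightarrow> 'x set \<Rightarrow> 'x \<Rightarrow> 'b" where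
  "restrict0 f S = (\<lambda>z. if z \<in> S then f z else 0)"

definition single :: "'x \<Rightarrow> 'b::zero \<Rightarrow> 'x \<Rightarrow> 'b" where
  "single x v = (\<lambda>z. if z = x then v else 0)"

lemma restrict0_restrict0: "S \<subseteq> T \<Longrightarrow> restrict0 (restrict0 f T) S = restrict0 f S"
  by (auto simp: restrict0_def fun_eq_iff)

lemma restrict0_id: "(\<And>z. z \<notin> S \<Longrightarrow> f z = 0) \<Longrightarrow> restrict0 f S = f"
  by (auto simp: restrict0_def fun_eq_iff)

lemma restrict0_add: "restrict0 (f + g :: 'x \<Rightarrow> 'b::monoid_add) S = restrict0 f S + restrict0 g S"
  by (auto simp: restrict0_def fun_eq_iff)

lemma restrict0_sscale: "restrict0 (sscale c f) S = sscale c (restrict0 f S)"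
  by (auto simp: restrict0_def fun_eq_iff)

lemma single_add: "single x (u + v :: 'b::monoid_add) = single x u + single x v"
  by (auto simp: single_def fun_eq_iff)

lemma single_vscale: "single x (vscale c v) = sscale c (single x v)"
  by (auto simp: single_def fun_eq_iff)

lemma linear_single: "Vector_Spaces.linear vscale sscale (single x :: ('a \<Rightarrow> complex) \<Rightarrow> 'x \<Rightarrow> _)"
  unfolding Vector_Spaces.linear_iff
  by (intro conjI allI fun_vs.vector_space_axioms sec_vs.vector_space_axioms single_add single_vscale)

lemma linear_restrict0: "Vector_Spaces.linear sscale sscale (\<lambda>g :: 'x \<Rightarrow> 'a \<Rightarrow> complex. restrict0 g S)"
  unfolding Vector_Spaces.linear_iff
  by (intro conjI allI sec_vs.vector_space_axioms restrict0_add restrict0_sscale)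

lemma sum_single: "finite P \<Longrightarrow> (\<Sum>x\<in>P. single x (f x)) = restrict0 f P"
  by (auto simp: fun_eq_iff sum_fun_apply single_def restrict0_def if_distrib cong: if_cong)

locale section_operator =
  fixes X :: "'x set" and F :: "'x \<Rightarrow> (nat \<Rightarrow> complex) set"
    and A :: "('x \<Rightarrow> nat \<Rightarrow> complex) \<Rightarrow> ('x \<Rightarrow> nat \<Rightarrow> complex)"
  assumes fd: "\<And>x. x \<in> X \<Longrightarrow> fd_csubspace (F x)"
    and lin: "lin_op X F A"
    and cont: "continuous_map (sect_top X F) (sect_top X F) A"
begin

text \<open>\<^const>\<open>Gamma_sec\<close> leaves sections undefined outside \<^term>\<open>X\<close>, so it is not a subspace;
  we work in its copy \<open>Gamma0\<close> of sections extended by zero.\<close>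
definition Gamma0 :: "('x \<Rightarrow> nat \<Rightarrow> complex) set" where
  "Gamma0 = {f. (\<forall>x\<in>X. f x \<in> F x) \<and> (\<forall>x. x \<notin> X \<longrightarrow> f x = 0)}"

definition A0 :: "('x \<Rightarrow> nat \<Rightarrow> complex) \<Rightarrow> ('x \<Rightarrow> nat \<Rightarrow> complex)" where
  "A0 f = restrict0 (A (restrict f X)) X"

lemma F_subspace: "x \<in> X \<Longrightarrow> fun_vs.subspace (F x)"
  using fd fd_csubspace_subspace by blast

lemma Gamma0_subspace: "sec_vs.subspace Gamma0"
  unfolding sec_vs.subspace_def Gamma0_def
  by (auto intro!: fun_vs.subspace_0 fun_vs.subspace_add fun_vs.subspace_scale F_subspace)

lemma restrict_in_Gamma_sec: "f \<in> Gamma0 \<Longrightarrow> restrict f X \<in> Gamma_sec X F"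
  by (auto simp: Gamma0_def Gamma_sec_def)

lemma restrict0_in_Gamma0: "g \<in> Gamma_sec X F \<Longrightarrow> restrict0 g X \<in> Gamma0"
  by (auto simp: Gamma0_def Gamma_sec_def restrict0_def)

lemma Gamma0_closed_restrict0: "f \<in> Gamma0 \<Longrightarrow> restrict0 f S \<in> Gamma0"
  using F_subspace fun_vs.subspace_0 by (auto simp: Gamma0_def restrict0_def)

lemma single_in_Gamma0: "x \<in> X \<Longrightarrow> v \<in> F x \<Longrightarrow> single x v \<in> Gamma0"
  using F_subspace fun_vs.subspace_0 by (auto simp: Gamma0_def single_def)

lemma restrict_restrict0: "g \<in> Gamma_sec X F \<Longrightarrow> restrict (restrict0 g X) X = g"
  by (auto simp: Gamma_sec_def restrict0_def fun_eq_iff PiE_def extensional_def)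

lemma A_in_Gamma_sec: "f \<in> Gamma_sec X F \<Longrightarrow> A f \<in> Gamma_sec X F"
  using lin unfolding lin_op_def by blast

lemma A0_restrict0: "g \<in> Gamma_sec X F \<Longrightarrow> A0 (restrict0 g X) = restrict0 (A g) X"
  by (simp add: A0_def restrict_restrict0)

lemma A0_in_Gamma0: "f \<in> Gamma0 \<Longrightarrow> A0 f \<in> Gamma0"
  by (simp add: A0_def A_in_Gamma_sec restrict0_in_Gamma0 restrict_in_Gamma_sec)

lemma A_add:
  "f \<in> Gamma_sec X F \<Longrightarrow> g \<in> Gamma_sec X F \<Longrightarrow> A (\<lambda>x\<in>X. f x + g x) = (\<lambda>x\<in>X. A f x + A g x)"
  using lin unfolding lin_op_def vadd_eq_plus by blast

lemma A_vscale: "f \<in> Gamma_sec X F \<Longrightarrow> A (\<lambda>x\<in>X. vscale c (f x)) = (\<lambda>x\<in>X. vscale c (A f x))"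
  using lin unfolding lin_op_def cscale_eq_vscale by blast

lemma A0_add:
  assumes "f \<in> Gamma0" "g \<in> Gamma0"
  shows "A0 (f + g) = A0 f + A0 g"
proof -
  have "restrict (f + g) X = (\<lambda>x\<in>X. restrict f X x + restrict g X x)"
    by (simp add: fun_eq_iff)
  then have "A (restrict (f + g) X) = (\<lambda>x\<in>X. A (restrict f X) x + A (restrict g X) x)"
    using A_add[OF restrict_in_Gamma_sec[OF assms(1)] restrict_in_Gamma_sec[OF assms(2)]] by simp
  then show ?thesis by (simp add: A0_def restrict0_def fun_eq_iff)
qed

lemma A0_sscale:
  assumes "f \<in> Gamma0"
  shows "A0 (sscale c f) = sscale c (A0 f)"
proof -
  have "restrict (sscale c f) X = (\<lambda>x\<in>X. vscale c (restrict f X x))"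
    by (simp add: fun_eq_iff)
  then have "A (restrict (sscale c f) X) = (\<lambda>x\<in>X. vscale c (A (restrict f X) x))"
    using A_vscale[OF restrict_in_Gamma_sec[OF assms]] by simp
  then show ?thesis by (simp add: A0_def restrict0_def fun_eq_iff)
qed

lemma A0_zero: "A0 0 = 0"
  using A0_sscale[OF sec_vs.subspace_0[OF Gamma0_subspace], of 0] by simp

lemma A0_diff:
  assumes "f \<in> Gamma0" "g \<in> Gamma0"
  shows "A0 (f - g) = A0 f - A0 g"
proof -
  have "f - g \<in> Gamma0" using sec_vs.subspace_diff[OF Gamma0_subspace assms] .
  then have "A0 (f - g + g) = A0 (f - g) + A0 g" using A0_add assms(2) by blast
  then show ?thesis by simp
qed

lemma A0_sum: "(\<And>i. i \<in> I \<Longrightarrow> f i \<in> Gamma0) \<Longrightarrow> A0 (\<Sum>i\<in>I. f i) = (\<Sum>i\<in>I. A0 (f i))"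
proof (induction I rule: infinite_finite_induct)
  case (insert i I)
  have "sum f I \<in> Gamma0"
    using insert.prems sec_vs.subspace_sum[OF Gamma0_subspace, of I f] by simp
  then have "A0 (sum f (insert i I)) = A0 (f i) + A0 (sum f I)"
    using A0_add insert.prems unfolding sum.insert[OF insert.hyps] by simp
  also have "\<dots> = (\<Sum>i\<in>insert i I. A0 (f i))"
    using insert.IH insert.prems unfolding sum.insert[OF insert.hyps] by simp
  finally show ?case .
qed (simp_all add: A0_zero)

lemma A_finite_dependence:
  assumes x: "x \<in> X"
  obtains K where "finite K" "K \<subseteq> X" "\<And>f. f \<in> Gamma_sec X F \<Longrightarrow> (\<forall>z\<in>K. f z = 0) \<Longrightarrow> A f x = 0"
proof -
  obtain B where B: "finite B" "F x = fun_vs.span B"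
    using fd_csubspace_eq_span fd x by metis
  obtain I where I: "finite I" "\<And>v. v \<in> F x \<Longrightarrow> (\<forall>i\<in>I. v i = 0) \<Longrightarrow> v = 0"
    using finite_coordinates_separate_span[OF B(1)] B(2) by metis
  have "\<exists>K. finite K \<and> K \<subseteq> X \<and> (\<forall>f\<in>Gamma_sec X F. (\<forall>z\<in>K. f z = 0) \<longrightarrow> A f x i = 0)" for i
  proof -
    have "continuous_map (sect_top X F) (subtopology euclidean (F x)) (\<lambda>f. A f x)"
      using continuous_map_compose[OF cont[unfolded sect_top_def] continuous_map_product_projection[OF x]]
      by (simp add: sect_top_def o_def)
    then have "continuous_map (sect_top X F) euclidean (\<lambda>f. A f x)"
      using continuous_map_in_subtopology by blast
    moreover have "continuous_map euclidean euclidean (\<lambda>v :: nat \<Rightarrow> complex. v i)"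
      using continuous_map_product_projection[of i UNIV "\<lambda>_. euclidean"]
      by (simp add: euclidean_product_topology)
    ultimately have cont_i: "continuous_map (sect_top X F) euclidean (\<lambda>f. A f x i)"
      using continuous_map_compose unfolding o_def by fast
    have homogeneous_i: "A (\<lambda>x\<in>X. vscale c (f x)) x i = c * A f x i" if "f \<in> Gamma_sec X F" for c f
      using A_vscale[OF that] x by simp
    obtain K where "finite K" "K \<subseteq> X"
      "\<And>f. f \<in> Gamma_sec X F \<Longrightarrow> (\<forall>z\<in>K. f z = 0) \<Longrightarrow> A f x i = 0"
      using continuous_functional_finite_dependence[OF cont_i F_subspace homogeneous_i] by blast
    then show ?thesis by blast
  qed
  then obtain K where K: "\<And>i. finite (K i)" "\<And>i. K i \<subseteq> X"
    "\<And>i f. f \<in> Gamma_sec X F \<Longrightarrow> (\<forall>z\<in>K i. f z = 0) \<Longrightarrow> A f x i = 0"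
    by metis
  show ?thesis
  proof (rule that[of "\<Union>i\<in>I. K i"])
    show "finite (\<Union>i\<in>I. K i)" "(\<Union>i\<in>I. K i) \<subseteq> X" using I(1) K(1,2) by auto
    fix f assume "f \<in> Gamma_sec X F" "\<forall>z\<in>\<Union>i\<in>I. K i. f z = 0"
    moreover have "A f x \<in> F x" using A_in_Gamma_sec[OF \<open>f \<in> Gamma_sec X F\<close>] x by (auto simp: Gamma_sec_def)
    ultimately show "A f x = 0" using I(2) K(3) by blast
  qed
qed

definition dep_set :: "'x \<Rightarrow> 'x set" where
  "dep_set x = (SOME K. finite K \<and> K \<subseteq> X \<and>
     (\<forall>f\<in>Gamma_sec X F. (\<forall>z\<in>K. f z = 0) \<longrightarrow> A f x = 0))"

lemma dep_set:
  assumes "x \<in> X"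
  shows "finite (dep_set x)" "dep_set x \<subseteq> X"
    "\<And>f. f \<in> Gamma_sec X F \<Longrightarrow> (\<forall>z\<in>dep_set x. f z = 0) \<Longrightarrow> A f x = 0"
proof -
  have "\<exists>K. finite K \<and> K \<subseteq> X \<and> (\<forall>f\<in>Gamma_sec X F. (\<forall>z\<in>K. f z = 0) \<longrightarrow> A f x = 0)"
    using A_finite_dependence[OF assms] by metis
  from someI_ex[OF this] show "finite (dep_set x)" "dep_set x \<subseteq> X"
    "\<And>f. f \<in> Gamma_sec X F \<Longrightarrow> (\<forall>z\<in>dep_set x. f z = 0) \<Longrightarrow> A f x = 0"
    unfolding dep_set_def by blast+
qed

lemma A0_local:
  assumes "x \<in> X" "f \<in> Gamma0" "g \<in> Gamma0" "\<And>z. z \<in> dep_set x \<Longrightarrow> f z = g z"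
  shows "A0 f x = A0 g x"
proof -
  have "f - g \<in> Gamma0" using sec_vs.subspace_diff[OF Gamma0_subspace assms(2,3)] .
  then have "A (restrict (f - g) X) x = 0"
    by (rule dep_set(3)[OF assms(1) restrict_in_Gamma_sec]) (use assms(1,4) dep_set(2) in auto)
  then have "A0 (f - g) x = 0" using assms(1) by (simp add: A0_def restrict0_def)
  then show ?thesis using A0_diff[OF assms(2,3)] by simp
qed

section \<open>The pairing and the dual operator\<close>

abbreviation dual_supp :: "('x \<Rightarrow> (nat \<Rightarrow> complex) \<Rightarrow> complex) \<Rightarrow> 'x set" where
  "dual_supp \<phi> \<equiv> {x \<in> X. \<phi> x \<noteq> (\<lambda>_. 0)}"

lemma dual_supp_finite: "\<phi> \<in> Gamma_c_dual X F \<Longrightarrow> finite (dual_supp \<phi>)"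
  by (simp add: Gamma_c_dual_def)

lemma Gamma_c_dual_outside: "\<phi> \<in> Gamma_c_dual X F \<Longrightarrow> x \<notin> X \<Longrightarrow> \<phi> x = (\<lambda>_. 0)"
  by (simp add: Gamma_c_dual_def)

lemma Gamma_c_dual_lin_functional: "\<phi> \<in> Gamma_c_dual X F \<Longrightarrow> lin_functional (F x) (\<phi> x)"
  by (cases "x \<in> X") (auto simp: Gamma_c_dual_def lin_functional_def)

lemma Gamma_c_dual_add:
  "\<phi> \<in> Gamma_c_dual X F \<Longrightarrow> u \<in> F x \<Longrightarrow> v \<in> F x \<Longrightarrow> \<phi> x (u + v) = \<phi> x u + \<phi> x v"
  using Gamma_c_dual_lin_functional by (simp add: lin_functional_def vadd_eq_plus)

lemma Gamma_c_dual_vscale: "\<phi> \<in> Gamma_c_dual X F \<Longrightarrow> v \<in> F x \<Longrightarrow> \<phi> x (vscale c v) = c * \<phi> x v"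
  using Gamma_c_dual_lin_functional by (simp add: lin_functional_def cscale_eq_vscale)

lemma Gamma_c_dual_outside_fibre: "\<phi> \<in> Gamma_c_dual X F \<Longrightarrow> v \<notin> F x \<Longrightarrow> \<phi> x v = 0"
  using Gamma_c_dual_lin_functional by (simp add: lin_functional_def)

lemma Gamma_c_dual_zero: "\<phi> \<in> Gamma_c_dual X F \<Longrightarrow> \<phi> x 0 = 0"
proof (cases "0 \<in> F x")
  case True
  assume "\<phi> \<in> Gamma_c_dual X F"
  then show ?thesis using Gamma_c_dual_vscale[of \<phi> 0 x 0] True by simp
qed (simp add: Gamma_c_dual_outside_fibre)

lemma pairing_eq_sum:
  assumes "\<phi> \<in> Gamma_c_dual X F" "finite P" "dual_supp \<phi> \<subseteq> P"
  shows "pairing X \<phi> f = (\<Sum>x\<in>P. \<phi> x (f x))"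
proof -
  have "\<phi> x (f x) = 0" if "x \<notin> X" for x
    using Gamma_c_dual_outside[OF assms(1) that] by simp
  then show ?thesis
    unfolding pairing_def by (intro sum.mono_neutral_left) (use assms(2,3) in auto)
qed

lemma pairing_cong:
  "(\<And>x. x \<in> X \<Longrightarrow> \<phi> x \<noteq> (\<lambda>_. 0) \<Longrightarrow> f x = g x) \<Longrightarrow> pairing X \<phi> f = pairing X \<phi> g"
  unfolding pairing_def by (rule sum.cong) auto

lemma pairing_single:
  assumes "\<phi> \<in> Gamma_c_dual X F" "x \<in> X"
  shows "pairing X \<phi> (single x v) = \<phi> x v"
proof -
  have "finite (dual_supp \<phi>)" by (rule dual_supp_finite[OF assms(1)])
  then have "pairing X \<phi> (single x v) = (\<Sum>z\<in>insert x (dual_supp \<phi>). \<phi> z (single x v z))"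
    by (intro pairing_eq_sum[OF assms(1)]) auto
  also have "\<dots> = \<phi> x v"
    using \<open>finite _\<close> by (simp add: single_def Gamma_c_dual_zero[OF assms(1)] if_distrib cong: if_cong)
  finally show ?thesis .
qed

lemma pairing_add:
  assumes "\<phi> \<in> Gamma_c_dual X F" "f \<in> Gamma0" "g \<in> Gamma0"
  shows "pairing X \<phi> (f + g) = pairing X \<phi> f + pairing X \<phi> g"
  unfolding pairing_def sum.distrib[symmetric]
  by (rule sum.cong) (use assms in \<open>auto simp: Gamma0_def intro: Gamma_c_dual_add\<close>)

lemma pairing_sscale:
  assumes "\<phi> \<in> Gamma_c_dual X F" "f \<in> Gamma0"
  shows "pairing X \<phi> (sscale c f) = c * pairing X \<phi> f"
  unfolding pairing_def sum_distrib_left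
  by (rule sum.cong) (use assms in \<open>auto simp: Gamma0_def intro: Gamma_c_dual_vscale\<close>)

lemma pairing_zero: "\<phi> \<in> Gamma_c_dual X F \<Longrightarrow> pairing X \<phi> 0 = 0"
  by (simp add: pairing_def Gamma_c_dual_zero)

lemma pairing_sum:
  assumes "\<phi> \<in> Gamma_c_dual X F" "\<And>i. i \<in> I \<Longrightarrow> f i \<in> Gamma0"
  shows "pairing X \<phi> (\<Sum>i\<in>I. f i) = (\<Sum>i\<in>I. pairing X \<phi> (f i))"
  using assms(2)
proof (induction I rule: infinite_finite_induct)
  case (insert i I)
  have "sum f I \<in> Gamma0"
    using insert.prems sec_vs.subspace_sum[OF Gamma0_subspace, of I f] by simp
  then have "pairing X \<phi> (sum f (insert i I)) = pairing X \<phi> (f i) + pairing X \<phi> (sum f I)"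
    using pairing_add[OF assms(1)] insert.prems unfolding sum.insert[OF insert.hyps] by simp
  also have "\<dots> = (\<Sum>i\<in>insert i I. pairing X \<phi> (f i))"
    using insert.IH insert.prems unfolding sum.insert[OF insert.hyps] by simp
  finally show ?case .
qed (simp_all add: pairing_zero[OF assms(1)])

lemma pairing_nondegenerate:
  assumes "\<phi> \<in> Gamma_c_dual X F" "\<psi> \<in> Gamma_c_dual X F"
    and "\<And>f. f \<in> Gamma_sec X F \<Longrightarrow> pairing X \<phi> f = pairing X \<psi> f"
  shows "\<phi> = \<psi>"
proof (intro ext)
  fix x v
  show "\<phi> x v = \<psi> x v"
  proof (cases "x \<in> X \<and> v \<in> F x")
    case True
    then have "restrict (single x v) X \<in> Gamma_sec X F"
      by (simp add: restrict_in_Gamma_sec single_in_Gamma0)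
    then have "pairing X \<phi> (restrict (single x v) X) = pairing X \<psi> (restrict (single x v) X)"
      by (rule assms(3))
    then have "pairing X \<phi> (single x v) = pairing X \<psi> (single x v)"
      by (simp add: pairing_cong[of \<phi> "single x v" "restrict (single x v) X"]
          pairing_cong[of \<psi> "single x v" "restrict (single x v) X"])
    with True show ?thesis by (simp add: pairing_single assms(1,2))
  next
    case False
    then show ?thesis
      using Gamma_c_dual_outside Gamma_c_dual_outside_fibre assms(1,2) by metis
  qed
qed

lemma dual_op_eqI:
  assumes "\<psi> \<in> Gamma_c_dual X F" "\<And>f. f \<in> Gamma_sec X F \<Longrightarrow> pairing X \<psi> f = pairing X \<phi> (A f)"
  shows "dual_op X F A \<phi> = \<psi>"
  unfolding dual_op_def
proof (rule the_equality)
  fix \<psi>' assume "\<psi>' \<in> Gamma_c_dual X F \<and> (\<forall>f\<in>Gamma_sec X F. pairing X \<psi>' f = pairing X \<phi> (A f))"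
  then show "\<psi>' = \<psi>" using pairing_nondegenerate[of \<psi>' \<psi>] assms by simp
qed (use assms in blast)

definition transpose :: "('x \<Rightarrow> (nat \<Rightarrow> complex) \<Rightarrow> complex) \<Rightarrow> 'x \<Rightarrow> (nat \<Rightarrow> complex) \<Rightarrow> complex" where
  "transpose \<phi> x v = (if x \<in> X \<and> v \<in> F x then pairing X \<phi> (A0 (single x v)) else 0)"

lemma transpose_vanishes:
  assumes "\<phi> \<in> Gamma_c_dual X F" "x \<notin> (\<Union>z\<in>dual_supp \<phi>. dep_set z)"
  shows "transpose \<phi> x = (\<lambda>_. 0)"
proof
  fix v
  show "transpose \<phi> x v = 0"
  proof (cases "x \<in> X \<and> v \<in> F x")
    case True
    have "A0 (single x v) z = A0 0 z" if "z \<in> X" "\<phi> z \<noteq> (\<lambda>_. 0)" for z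
    proof (rule A0_local[OF that(1)])
      show "single x v \<in> Gamma0" using True by (simp add: single_in_Gamma0)
      show "0 \<in> Gamma0" by (rule sec_vs.subspace_0[OF Gamma0_subspace])
      show "single x v w = 0 w" if "w \<in> dep_set z" for w
        using that \<open>z \<in> X\<close> \<open>\<phi> z \<noteq> (\<lambda>_. 0)\<close> assms(2) by (auto simp: single_def)
    qed
    then have "pairing X \<phi> (A0 (single x v)) = pairing X \<phi> 0"
      unfolding A0_zero by (rule pairing_cong)
    with True show ?thesis by (simp add: transpose_def pairing_zero assms(1))
  qed (auto simp: transpose_def)
qed

lemma transpose_in_Gamma_c_dual:
  assumes "\<phi> \<in> Gamma_c_dual X F"
  shows "transpose \<phi> \<in> Gamma_c_dual X F"
  unfolding Gamma_c_dual_def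
proof (intro CollectI conjI allI impI ballI)
  let ?K = "\<Union>z\<in>dual_supp \<phi>. dep_set z"
  have "finite ?K"
    using dual_supp_finite[OF assms] dep_set(1) by auto
  moreover have "{x. transpose \<phi> x \<noteq> (\<lambda>_. 0)} \<subseteq> ?K"
    using transpose_vanishes[OF assms] by blast
  ultimately show "finite {x. transpose \<phi> x \<noteq> (\<lambda>_. 0)}" by (rule finite_subset[rotated])
  show "transpose \<phi> x = (\<lambda>_. 0)" if "x \<notin> X" for x
    using that by (auto simp: transpose_def)
  fix x assume x: "x \<in> X"
  show "lin_functional (F x) (transpose \<phi> x)"
    unfolding lin_functional_def vadd_eq_plus cscale_eq_vscale
  proof (intro conjI ballI allI impI)
    fix u v assume uv: "u \<in> F x" "v \<in> F x"
    then have "u + v \<in> F x" using fun_vs.subspace_add[OF F_subspace[OF x]] by blast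
    with x uv show "transpose \<phi> x (u + v) = transpose \<phi> x u + transpose \<phi> x v"
      by (simp add: transpose_def single_add A0_add single_in_Gamma0 A0_in_Gamma0 pairing_add[OF assms])
  next
    fix c v assume v: "v \<in> F x"
    then have "vscale c v \<in> F x" using fun_vs.subspace_scale[OF F_subspace[OF x]] by blast
    with x v show "transpose \<phi> x (vscale c v) = c * transpose \<phi> x v"
      by (simp add: transpose_def single_vscale A0_sscale single_in_Gamma0 A0_in_Gamma0
          pairing_sscale[OF assms])
  qed (simp add: transpose_def)
qed

lemma pairing_transpose:
  assumes \<phi>: "\<phi> \<in> Gamma_c_dual X F" and f: "f \<in> Gamma_sec X F"
  shows "pairing X (transpose \<phi>) f = pairing X \<phi> (A f)"
proof -
  let ?K = "\<Union>z\<in>dual_supp \<phi>. dep_set z"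
  define g where "g = restrict0 f X"
  have g: "g \<in> Gamma0" using f by (simp add: g_def restrict0_in_Gamma0)
  have K: "finite ?K" "?K \<subseteq> X"
    using dual_supp_finite[OF \<phi>] dep_set(1,2) by auto
  have single_g: "single x (g x) \<in> Gamma0" if "x \<in> ?K" for x
  proof -
    have "x \<in> X" using that K(2) by blast
    moreover have "g x \<in> F x" using g \<open>x \<in> X\<close> by (simp add: Gamma0_def)
    ultimately show ?thesis by (rule single_in_Gamma0)
  qed
  have "pairing X (transpose \<phi>) f = (\<Sum>x\<in>?K. transpose \<phi> x (f x))"
    using transpose_vanishes[OF \<phi>] K(1) by (intro pairing_eq_sum transpose_in_Gamma_c_dual \<phi>) auto
  also have "\<dots> = (\<Sum>x\<in>?K. pairing X \<phi> (A0 (single x (g x))))"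
    using K(2) f by (intro sum.cong) (auto simp: transpose_def g_def restrict0_def Gamma_sec_def)
  also have "\<dots> = pairing X \<phi> (\<Sum>x\<in>?K. A0 (single x (g x)))"
    by (rule pairing_sum[OF \<phi>, symmetric]) (rule A0_in_Gamma0[OF single_g])
  also have "\<dots> = pairing X \<phi> (A0 (\<Sum>x\<in>?K. single x (g x)))"
    by (subst A0_sum) (simp_all add: single_g)
  also have "\<dots> = pairing X \<phi> (A0 g)"
  proof (rule pairing_cong)
    fix z assume z: "z \<in> X" "\<phi> z \<noteq> (\<lambda>_. 0)"
    show "A0 (\<Sum>x\<in>?K. single x (g x)) z = A0 g z"
      unfolding sum_single[OF K(1)]
    proof (rule A0_local[OF z(1) Gamma0_closed_restrict0[OF g] g])
      show "restrict0 g ?K w = g w" if "w \<in> dep_set z" for w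
        using that z by (auto simp: restrict0_def)
    qed
  qed
  also have "\<dots> = pairing X \<phi> (A f)"
    unfolding g_def A0_restrict0[OF f] by (rule pairing_cong) (simp add: restrict0_def)
  finally show ?thesis .
qed

lemma dual_op_eq_transpose: "\<phi> \<in> Gamma_c_dual X F \<Longrightarrow> dual_op X F A \<phi> = transpose \<phi>"
  by (intro dual_op_eqI transpose_in_Gamma_c_dual pairing_transpose)

lemma surj_imp_inj_dual_op:
  assumes "A ` Gamma_sec X F = Gamma_sec X F"
  shows "inj_on (dual_op X F A) (Gamma_c_dual X F)"
proof (rule inj_onI)
  fix \<phi> \<psi> assume \<phi>: "\<phi> \<in> Gamma_c_dual X F" and \<psi>: "\<psi> \<in> Gamma_c_dual X F"
    and "dual_op X F A \<phi> = dual_op X F A \<psi>"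
  then have eq: "transpose \<phi> = transpose \<psi>" by (simp add: dual_op_eq_transpose)
  show "\<phi> = \<psi>"
  proof (rule pairing_nondegenerate[OF \<phi> \<psi>])
    fix g assume "g \<in> Gamma_sec X F"
    then obtain f where f: "f \<in> Gamma_sec X F" "g = A f" using assms by blast
    then show "pairing X \<phi> g = pairing X \<psi> g"
      using pairing_transpose[OF \<phi> f(1)] pairing_transpose[OF \<psi> f(1)] eq by simp
  qed
qed

section \<open>Local solvability\<close>

definition Gamma0_on :: "'x set \<Rightarrow> ('x \<Rightarrow> nat \<Rightarrow> complex) set" where
  "Gamma0_on L = {g \<in> Gamma0. \<forall>z. z \<notin> L \<longrightarrow> g z = 0}"

lemma Gamma0_on_subspace: "sec_vs.subspace (Gamma0_on L)"
  using Gamma0_subspace unfolding sec_vs.subspace_def Gamma0_on_def by auto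

lemma restrict0_in_Gamma0_on: "g \<in> Gamma0 \<Longrightarrow> restrict0 g L \<in> Gamma0_on L"
  by (simp add: Gamma0_on_def Gamma0_closed_restrict0) (simp add: restrict0_def)

definition localize :: "'x set \<Rightarrow> (('x \<Rightarrow> nat \<Rightarrow> complex) \<Rightarrow> complex) \<Rightarrow> 'x \<Rightarrow> (nat \<Rightarrow> complex) \<Rightarrow> complex"
  where "localize S l x v = (if x \<in> S \<and> v \<in> F x then l (single x v) else 0)"

lemma localize_in_Gamma_c_dual:
  assumes l: "Vector_Spaces.linear sscale (*) l" and S: "finite S" "S \<subseteq> X"
  shows "localize S l \<in> Gamma_c_dual X F"
  unfolding Gamma_c_dual_def
proof (intro CollectI conjI allI impI ballI)
  interpret l: Vector_Spaces.linear sscale "(*)" l by (rule l)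
  have "{x. localize S l x \<noteq> (\<lambda>_. 0)} \<subseteq> S" by (auto simp: localize_def)
  then show "finite {x. localize S l x \<noteq> (\<lambda>_. 0)}" using S(1) by (rule finite_subset)
  show "localize S l x = (\<lambda>_. 0)" if "x \<notin> X" for x
    using that S(2) by (auto simp: localize_def fun_eq_iff)
  fix x assume x: "x \<in> X"
  show "lin_functional (F x) (localize S l x)"
    unfolding lin_functional_def vadd_eq_plus cscale_eq_vscale
    using fun_vs.subspace_add[OF F_subspace[OF x]] fun_vs.subspace_scale[OF F_subspace[OF x]]
    by (auto simp: localize_def single_add single_vscale l.add l.scale)
qed

lemma pairing_localize:
  assumes l: "Vector_Spaces.linear sscale (*) l" and S: "finite S" "S \<subseteq> X"
    and f: "\<And>x. x \<in> S \<Longrightarrow> f x \<in> F x"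
  shows "pairing X (localize S l) f = l (restrict0 f S)"
proof -
  interpret l: Vector_Spaces.linear sscale "(*)" l by (rule l)
  have "pairing X (localize S l) f = (\<Sum>x\<in>S. localize S l x (f x))"
    by (rule pairing_eq_sum[OF localize_in_Gamma_c_dual[OF l S] S(1)]) (auto simp: localize_def)
  also have "\<dots> = (\<Sum>x\<in>S. l (single x (f x)))"
    using f by (simp add: localize_def)
  also have "\<dots> = l (restrict0 f S)"
    by (simp add: l.sum[symmetric] sum_single[OF S(1)])
  finally show ?thesis .
qed

lemma dual_op_zero: "dual_op X F A (\<lambda>_ _. 0) = (\<lambda>_ _. 0)"
  by (rule dual_op_eqI) (auto simp: Gamma_c_dual_def lin_functional_def pairing_def)

definition local_range :: "'x set \<Rightarrow> 'x set \<Rightarrow> ('x \<Rightarrow> nat \<Rightarrow> complex) set" where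
  "local_range S L = (\<lambda>g. restrict0 (A0 g) S) ` Gamma0_on L"

lemma local_range_subspace: "sec_vs.subspace (local_range S L)"
  unfolding local_range_def
proof (rule sec_vs.subspaceI)
  show "0 \<in> (\<lambda>g. restrict0 (A0 g) S) ` Gamma0_on L"
    using sec_vs.subspace_0[OF Gamma0_on_subspace]
    by (auto simp: A0_zero restrict0_def image_iff fun_eq_iff intro!: bexI[of _ 0])
  fix a b assume "a \<in> (\<lambda>g. restrict0 (A0 g) S) ` Gamma0_on L" "b \<in> (\<lambda>g. restrict0 (A0 g) S) ` Gamma0_on L"
  then obtain g h where "g \<in> Gamma0_on L" "h \<in> Gamma0_on L"
    "a = restrict0 (A0 g) S" "b = restrict0 (A0 h) S" by blast
  then show "a + b \<in> (\<lambda>g. restrict0 (A0 g) S) ` Gamma0_on L"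
    using sec_vs.subspace_add[OF Gamma0_on_subspace]
    by (intro image_eqI[of _ _ "g + h"]) (auto simp: A0_add restrict0_add Gamma0_on_def)
next
  fix c a assume "a \<in> (\<lambda>g. restrict0 (A0 g) S) ` Gamma0_on L"
  then obtain g where "g \<in> Gamma0_on L" "a = restrict0 (A0 g) S" by blast
  then show "sscale c a \<in> (\<lambda>g. restrict0 (A0 g) S) ` Gamma0_on L"
    using sec_vs.subspace_scale[OF Gamma0_on_subspace]
    by (intro image_eqI[of _ _ "sscale c g"]) (auto simp: A0_sscale restrict0_sscale Gamma0_on_def)
qed

lemma restrict0_A_in_local_range:
  assumes S: "S \<subseteq> X" and L: "\<And>x. x \<in> S \<Longrightarrow> dep_set x \<subseteq> L" and f: "f \<in> Gamma_sec X F"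
  shows "restrict0 (A f) S \<in> local_range S L"
proof -
  have f0: "restrict0 f X \<in> Gamma0" by (rule restrict0_in_Gamma0[OF f])
  have "A0 (restrict0 f X) x = A0 (restrict0 (restrict0 f X) L) x" if x: "x \<in> S" for x
  proof (rule A0_local[OF _ f0 Gamma0_closed_restrict0[OF f0]])
    show "x \<in> X" using x S by blast
    show "restrict0 f X w = restrict0 (restrict0 f X) L w" if "w \<in> dep_set x" for w
      using L[OF x] that by (auto simp: restrict0_def)
  qed
  moreover have "A f x = A0 (restrict0 f X) x" if "x \<in> X" for x
    unfolding A0_restrict0[OF f] using that by (simp add: restrict0_def)
  ultimately have "restrict0 (A f) S = restrict0 (A0 (restrict0 (restrict0 f X) L)) S"
    using S by (auto simp: restrict0_def fun_eq_iff)
  then show ?thesis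
    using restrict0_in_Gamma0_on[OF f0] by (auto simp: local_range_def)
qed

lemma dual_op_localize_eq_zero:
  assumes l: "Vector_Spaces.linear sscale (*) l" "\<And>r. r \<in> local_range S L \<Longrightarrow> l r = 0"
    and S: "finite S" "S \<subseteq> X" and L: "\<And>x. x \<in> S \<Longrightarrow> dep_set x \<subseteq> L"
  shows "dual_op X F A (localize S l) = (\<lambda>_ _. 0)"
proof (rule dual_op_eqI)
  show "(\<lambda>_ _. 0) \<in> Gamma_c_dual X F" by (auto simp: Gamma_c_dual_def lin_functional_def)
  fix f assume f: "f \<in> Gamma_sec X F"
  have "x \<in> S \<Longrightarrow> A f x \<in> F x" for x using A_in_Gamma_sec[OF f] S(2) by (auto simp: Gamma_sec_def)
  then have "pairing X (localize S l) (A f) = l (restrict0 (A f) S)"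
    by (rule pairing_localize[OF l(1) S])
  also have "\<dots> = 0" by (rule l(2)[OF restrict0_A_in_local_range[OF S(2) L f]])
  finally show "pairing X (\<lambda>_ _. 0) f = pairing X (localize S l) (A f)"
    by (simp add: pairing_def)
qed

lemma local_solution:
  assumes inj: "inj_on (dual_op X F A) (Gamma_c_dual X F)"
    and S: "finite S" "S \<subseteq> X" and L: "\<And>x. x \<in> S \<Longrightarrow> dep_set x \<subseteq> L"
    and y: "y \<in> Gamma0"
  shows "\<exists>g\<in>Gamma0_on L. \<forall>x\<in>S. A0 g x = y x"
proof (rule ccontr)
  assume no_solution: "\<not> (\<exists>g\<in>Gamma0_on L. \<forall>x\<in>S. A0 g x = y x)"
  have "restrict0 y S \<notin> local_range S L"
  proof
    assume "restrict0 y S \<in> local_range S L"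
    then obtain g where g: "g \<in> Gamma0_on L" "restrict0 (A0 g) S = restrict0 y S"
      by (auto simp: local_range_def)
    moreover have "A0 g x = y x" if "x \<in> S" for x
      using fun_cong[OF g(2), of x] that by (simp add: restrict0_def)
    ultimately show False using no_solution by blast
  qed
  then obtain l where l: "Vector_Spaces.linear sscale (*) l" "l (restrict0 y S) = 1"
    and l_range: "\<And>r. r \<in> local_range S L \<Longrightarrow> l r = 0"
    using sec_vs.separating_functional[OF local_range_subspace] by blast
  have "localize S l = (\<lambda>_ _. 0)"
    using inj localize_in_Gamma_c_dual[OF l(1) S] dual_op_zero
      dual_op_localize_eq_zero[OF l(1) l_range S L]
    by (auto simp: Gamma_c_dual_def lin_functional_def inj_on_def)
  moreover have "pairing X (localize S l) y = 1"
    using y S(2) by (subst pairing_localize[OF l(1) S]) (auto simp: Gamma0_def l(2))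
  ultimately show False by (simp add: pairing_def)
qed

lemma Gamma0_on_finite_span:
  assumes L: "finite L" "L \<subseteq> X"
  obtains E where "finite E" "Gamma0_on L \<subseteq> sec_vs.span E"
proof -
  have "\<forall>x\<in>L. \<exists>B. finite B \<and> F x = fun_vs.span B"
    using fd fd_csubspace_eq_span L(2) by (metis subsetD)
  then obtain B where B: "\<And>x. x \<in> L \<Longrightarrow> finite (B x) \<and> F x = fun_vs.span (B x)"
    by metis
  define E where "E = (\<Union>x\<in>L. single x ` B x)"
  have "g \<in> sec_vs.span E" if g: "g \<in> Gamma0_on L" for g
  proof -
    have "g = (\<Sum>x\<in>L. single x (g x))"
      using g by (simp add: sum_single[OF L(1)] restrict0_id Gamma0_on_def)
    also have "\<dots> \<in> sec_vs.span E"
    proof (rule sec_vs.span_sum)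
      fix x assume x: "x \<in> L"
      then have "g x \<in> fun_vs.span (B x)" using g B L(2) by (auto simp: Gamma0_on_def Gamma0_def)
      then have "single x (g x) \<in> sec_vs.span (single x ` B x)"
        using fun_sec_vs.linear_spans_image[OF linear_single, of "{g x}" "B x"] by auto
      also have "\<dots> \<subseteq> sec_vs.span E"
        by (rule sec_vs.span_mono) (use x in \<open>auto simp: E_def\<close>)
      finally show "single x (g x) \<in> sec_vs.span E" .
    qed
    finally show ?thesis .
  qed
  moreover have "finite E" using L(1) B by (auto simp: E_def)
  ultimately show ?thesis using that by blast
qed

end

section \<open>Global solutions\<close>

locale preimage_construction = section_operator X F A for X :: "'x set" and F A +
  fixes y :: "'x \<Rightarrow> nat \<Rightarrow> complex"
  assumes countable: "countable X" and nonempty: "X \<noteq> {}"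
    and dual_inj: "inj_on (dual_op X F A) (Gamma_c_dual X F)"
    and rhs: "y \<in> Gamma0"
begin

definition X_upto :: "nat \<Rightarrow> 'x set" where
  "X_upto n = from_nat_into X ` {..n}"

definition dep_upto :: "nat \<Rightarrow> 'x set" where
  "dep_upto n = (\<Union>x\<in>X_upto n. dep_set x)"

definition Sol :: "nat \<Rightarrow> ('x \<Rightarrow> nat \<Rightarrow> complex) \<Rightarrow> ('x \<Rightarrow> nat \<Rightarrow> complex) set" where
  "Sol n r = {g \<in> Gamma0_on (dep_upto n). \<forall>x\<in>X_upto n. A0 g x = r x}"

abbreviation cut :: "nat \<Rightarrow> ('x \<Rightarrow> nat \<Rightarrow> complex) \<Rightarrow> ('x \<Rightarrow> nat \<Rightarrow> complex)" where
  "cut n g \<equiv> restrict0 g (dep_upto n)"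

lemma X_upto_subset: "X_upto n \<subseteq> X"
  using from_nat_into[OF nonempty] by (auto simp: X_upto_def)

lemma X_upto_mono: "n \<le> m \<Longrightarrow> X_upto n \<subseteq> X_upto m"
  by (auto simp: X_upto_def)

lemma X_upto_exhausts:
  assumes "x \<in> X"
  obtains n where "x \<in> X_upto n"
proof -
  obtain n where "from_nat_into X n = x" using from_nat_into_surj[OF countable assms] by blast
  then have "x \<in> X_upto n" by (auto simp: X_upto_def)
  then show ?thesis by (rule that)
qed

lemma dep_upto_finite: "finite (dep_upto n)"
  unfolding dep_upto_def X_upto_def using dep_set(1) from_nat_into[OF nonempty] by blast

lemma dep_upto_subset: "dep_upto n \<subseteq> X"
  unfolding dep_upto_def using dep_set(2) X_upto_subset by blast

lemma dep_upto_mono: "n \<le> m \<Longrightarrow> dep_upto n \<subseteq> dep_upto m"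
  unfolding dep_upto_def using X_upto_mono by blast

lemma cut_cut: "n \<le> m \<Longrightarrow> cut n (cut m g) = cut n g"
  by (rule restrict0_restrict0[OF dep_upto_mono])

lemma A0_cut:
  assumes "x \<in> X_upto n" "g \<in> Gamma0"
  shows "A0 (cut n g) x = A0 g x"
proof (rule A0_local)
  show "x \<in> X" using assms(1) X_upto_subset by blast
  show "cut n g \<in> Gamma0" by (rule Gamma0_closed_restrict0[OF assms(2)])
  show "cut n g z = g z" if "z \<in> dep_set x" for z
    using that assms(1) by (auto simp: dep_upto_def restrict0_def)
qed (rule assms(2))

lemma cut_Sol:
  assumes "n \<le> m" "g \<in> Sol m r"
  shows "cut n g \<in> Sol n r"
proof -
  have g: "g \<in> Gamma0" using assms(2) by (simp add: Sol_def Gamma0_on_def)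
  have "A0 (cut n g) x = r x" if "x \<in> X_upto n" for x
    using A0_cut[OF that g] assms(2) X_upto_mono[OF assms(1)] that by (auto simp: Sol_def)
  then show ?thesis using restrict0_in_Gamma0_on[OF g] by (simp add: Sol_def)
qed

lemma Sol_nonempty: "Sol n y \<noteq> {}"
proof -
  have "finite (X_upto n)" by (simp add: X_upto_def)
  moreover have "dep_set x \<subseteq> dep_upto n" if "x \<in> X_upto n" for x
    using that by (auto simp: dep_upto_def)
  ultimately have "\<exists>g\<in>Gamma0_on (dep_upto n). \<forall>x\<in>X_upto n. A0 g x = y x"
    using local_solution[OF dual_inj _ X_upto_subset _ rhs] by blast
  then show ?thesis by (auto simp: Sol_def)
qed

lemma Sol_diff: "g \<in> Sol n r \<Longrightarrow> h \<in> Sol n r \<Longrightarrow> g - h \<in> Sol n 0"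
  using sec_vs.subspace_diff[OF Gamma0_on_subspace[of "dep_upto n"], of g h]
  by (simp add: Sol_def A0_diff Gamma0_on_def)

lemma Sol_add: "g \<in> Sol n r \<Longrightarrow> h \<in> Sol n 0 \<Longrightarrow> g + h \<in> Sol n r"
  using sec_vs.subspace_add[OF Gamma0_on_subspace[of "dep_upto n"], of g h]
  by (simp add: Sol_def A0_add Gamma0_on_def)

lemma Sol_zero_subspace: "sec_vs.subspace (Sol n 0)"
proof (rule sec_vs.subspaceI)
  show "0 \<in> Sol n 0"
    using sec_vs.subspace_0[OF Gamma0_on_subspace] by (simp add: Sol_def A0_zero)
  show "g + h \<in> Sol n 0" if "g \<in> Sol n 0" "h \<in> Sol n 0" for g h
    using that by (rule Sol_add)
  show "sscale c g \<in> Sol n 0" if "g \<in> Sol n 0" for c g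
    using that sec_vs.subspace_scale[OF Gamma0_on_subspace[of "dep_upto n"], of g c]
    by (simp add: Sol_def A0_sscale Gamma0_on_def)
qed

lemma cut_Sol_image_antimono:
  assumes "n \<le> m" "m \<le> m'"
  shows "cut n ` Sol m' r \<subseteq> cut n ` Sol m r"
proof
  fix w assume "w \<in> cut n ` Sol m' r"
  then obtain g where "g \<in> Sol m' r" "w = cut n g" by blast
  then have "cut m g \<in> Sol m r" "w = cut n (cut m g)"
    using cut_Sol[OF assms(2)] cut_cut[OF assms(1)] by auto
  then show "w \<in> cut n ` Sol m r" by blast
qed

lemma cut_kernel_images_stabilize: "\<exists>M\<ge>n. \<forall>m\<ge>M. cut n ` Sol m 0 = cut n ` Sol M 0"
proof -
  interpret cut: Vector_Spaces.linear sscale sscale "cut n" by (rule linear_restrict0)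
  obtain E where E: "finite E" "Gamma0_on (dep_upto n) \<subseteq> sec_vs.span E"
    using Gamma0_on_finite_span[OF dep_upto_finite dep_upto_subset] by blast
  have span: "cut n ` Sol m 0 \<subseteq> sec_vs.span E" for m
    using E(2) restrict0_in_Gamma0_on by (auto simp: Sol_def Gamma0_on_def)
  obtain M where M: "n \<le> M"
    and minimal: "\<And>m. n \<le> m \<Longrightarrow> cut n ` Sol m 0 \<subseteq> cut n ` Sol M 0 \<Longrightarrow> cut n ` Sol m 0 = cut n ` Sol M 0"
    using sec_vs.minimal_subspace_exists[of n "{n..}" "\<lambda>m. cut n ` Sol m 0" E,
        OF _ cut.subspace_image[OF Sol_zero_subspace] span E(1)]
    by (metis atLeast_iff order_refl)
  have "cut n ` Sol m 0 = cut n ` Sol M 0" if "M \<le> m" for m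
    using minimal[of m] cut_Sol_image_antimono[OF M that] M that by simp
  with M show ?thesis by blast
qed

text \<open>The solution sets are translates of the kernels, so their images stabilize with those of
  the kernels, which are subspaces of a finite-dimensional space.\<close>
lemma cut_Sol_images_stabilize: "\<exists>M\<ge>n. \<forall>m\<ge>M. cut n ` Sol m y = cut n ` Sol M y"
proof -
  interpret cut: Vector_Spaces.linear sscale sscale "cut n" by (rule linear_restrict0)
  obtain M where nM: "n \<le> M" and kernel: "\<And>m. M \<le> m \<Longrightarrow> cut n ` Sol m 0 = cut n ` Sol M 0"
    using cut_kernel_images_stabilize by blast
  have "cut n ` Sol M y \<subseteq> cut n ` Sol m y" if m: "M \<le> m" for m
  proof
    fix w assume "w \<in> cut n ` Sol M y"
    then obtain g0 where g0: "g0 \<in> Sol M y" "w = cut n g0" by blast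
    obtain g1 where g1: "g1 \<in> Sol m y" using Sol_nonempty by blast
    have g2: "cut M g1 \<in> Sol M y" by (rule cut_Sol[OF m g1])
    have "cut n (g0 - cut M g1) \<in> cut n ` Sol m 0"
      using Sol_diff[OF g0(1) g2] kernel[OF m] by blast
    then obtain h where h: "h \<in> Sol m 0" "cut n (g0 - cut M g1) = cut n h" by auto
    have "cut n (g1 + h) = cut n g1 + cut n g0 - cut n (cut M g1)"
      using h(2) by (simp add: cut.add cut.diff)
    also have "\<dots> = w" using g0(2) cut_cut[OF nM] by simp
    finally show "w \<in> cut n ` Sol m y" using Sol_add[OF g1 h(1)] by (auto intro: image_eqI[OF sym])
  qed
  with nM show ?thesis using cut_Sol_image_antimono[OF nM] by blast
qed

lemma thread_glues:
  assumes s: "\<And>n. s n \<in> Gamma0_on (dep_upto n)" and s_cut: "\<And>k n. k \<le> n \<Longrightarrow> cut k (s n) = s k"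
  obtains g where "g \<in> Gamma0" "\<And>n. cut n g = s n"
proof
  \<comment> \<open>If \<open>z\<close> lies in no \<open>dep_upto n\<close>, the junk index chosen by \<open>LEAST\<close> still gives \<open>g z = 0\<close>.\<close>
  define g where "g z = s (LEAST n. z \<in> dep_upto n) z" for z
  have s_Gamma0: "s n \<in> Gamma0" and s_outside: "z \<notin> dep_upto n \<Longrightarrow> s n z = 0" for n z
    using s[of n] by (auto simp: Gamma0_on_def)
  show "g \<in> Gamma0"
    using s_Gamma0 by (auto simp: Gamma0_def g_def)
  show "cut n g = s n" for n
  proof
    fix z
    show "cut n g z = s n z"
    proof (cases "z \<in> dep_upto n")
      case True
      define k where "k = (LEAST n. z \<in> dep_upto n)"
      have k: "k \<le> n" "z \<in> dep_upto k"
        using Least_le[of "\<lambda>n. z \<in> dep_upto n" n] LeastI[of "\<lambda>n. z \<in> dep_upto n" n] True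
        by (auto simp: k_def)
      have "g z = cut k (s n) z" using s_cut[OF k(1)] by (simp add: g_def k_def)
      with True k(2) show ?thesis by (simp add: restrict0_def)
    qed (simp add: restrict0_def s_outside)
  qed
qed

lemma preimage_exists: "\<exists>g\<in>Gamma0. \<forall>x\<in>X. A0 g x = y x"
proof -
  obtain s where s: "\<And>n. s n \<in> Sol n y" and s_cut: "\<And>k n. k \<le> n \<Longrightarrow> cut k (s n) = s k"
  proof (rule mittag_leffler_thread[of "\<lambda>n. Sol n y" cut])
    show "Sol m y \<noteq> {}" for m by (rule Sol_nonempty)
    show "cut n g \<in> Sol n y" if "n \<le> m" "g \<in> Sol m y" for n m g using that by (rule cut_Sol)
    show "cut n (cut m g) = cut n g" if "n \<le> m" for n m g using that by (rule cut_cut)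
    show "\<exists>M\<ge>n. \<forall>m\<ge>M. cut n ` Sol m y = cut n ` Sol M y" for n by (rule cut_Sol_images_stabilize)
  qed (rule that)
  moreover from s have "s n \<in> Gamma0_on (dep_upto n)" for n by (simp add: Sol_def)
  ultimately obtain g where g: "g \<in> Gamma0" "\<And>n. cut n g = s n"
    using thread_glues by blast
  have "A0 g x = y x" if x: "x \<in> X" for x
  proof -
    obtain n where n: "x \<in> X_upto n" using X_upto_exhausts[OF x] by blast
    have "A0 g x = A0 (cut n g) x" using A0_cut[OF n g(1)] by simp
    also have "\<dots> = y x" using s[of n] n by (simp add: g(2) Sol_def)
    finally show ?thesis .
  qed
  with g(1) show ?thesis by blast
qed

end

context section_operator
begin

lemma inj_dual_op_imp_surj:
  assumes "countable X" "X \<noteq> {}" "inj_on (dual_op X F A) (Gamma_c_dual X F)"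
  shows "A ` Gamma_sec X F = Gamma_sec X F"
proof
  show "A ` Gamma_sec X F \<subseteq> Gamma_sec X F" using A_in_Gamma_sec by blast
  show "Gamma_sec X F \<subseteq> A ` Gamma_sec X F"
  proof
    fix y assume y: "y \<in> Gamma_sec X F"
    interpret preimage_construction X F A "restrict0 y X"
      using assms restrict0_in_Gamma0[OF y] by unfold_locales
    obtain g where g: "g \<in> Gamma0" "\<And>x. x \<in> X \<Longrightarrow> A0 g x = restrict0 y X x"
      using preimage_exists by blast
    have "A (restrict g X) = y"
    proof (rule extensionalityI)
      show "A (restrict g X) \<in> extensional X" "y \<in> extensional X"
        using A_in_Gamma_sec[OF restrict_in_Gamma_sec[OF g(1)]] y by (auto simp: Gamma_sec_def PiE_def)
      show "A (restrict g X) x = y x" if "x \<in> X" for x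
        using g(2)[OF that] that by (simp add: A0_def restrict0_def)
    qed
    then show "y \<in> A ` Gamma_sec X F" using restrict_in_Gamma_sec[OF g(1)] by blast
  qed
qed

end

theorem theorem2p1:
  fixes X :: "'x set"
    and F :: "'x \<Rightarrow> (nat \<Rightarrow> complex) set"
    and A :: "('x \<Rightarrow> nat \<Rightarrow> complex) \<Rightarrow> ('x \<Rightarrow> nat \<Rightarrow> complex)"
  assumes "countable X" and "X \<noteq> {}"
    and "\<forall>x\<in>X. fd_csubspace (F x)"
    and "lin_op X F A"
    and "continuous_map (sect_top X F) (sect_top X F) A"
  shows "A ` Gamma_sec X F = Gamma_sec X F \<longleftrightarrow> inj_on (dual_op X F A) (Gamma_c_dual X F)"
proof -
  interpret section_operator X F A using assms(3-5) by unfold_locales auto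
  show ?thesis using surj_imp_inj_dual_op inj_dual_op_imp_surj[OF assms(1,2)] by blast
qed

end
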